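(* Let $\mathcal{X}$ be a finite set, $\pi$ a probability mass function on $\mathcal{X}$ with full support, and let a group $\mathcal{G}$ act on $\mathcal{X}$ with orbits $(\mathcal{O}_i)_{i=1}^k$ and Gibbs, Metropolis–Hastings and Barker orbit kernels $G$, $M$, $B$. Let $\mathbf{G}=\{Q\in\mathcal{S}(\pi):GQG=Q\}$. For every $P\in\mathcal{S}(\pi)$ and $Q\in\mathbf{G}$, $$D^\pi_{KL}(P\|Q)=D^\pi_{KL}(P\|GPG)+D^\pi_{KL}(GPG\|Q).$$ In particular $GPG$ is the unique projection of $P$ onto $\mathbf{G}$ under KL divergence: $D^\pi_{KL}(P\|GPG)=\min_{Q\in\mathbf{G}}D^\pi_{KL}(P\|Q)$. Moreover, for all $Q\in\mathbf{G}$, $D^\pi_{KL}(MPM\|Q)=D^\pi_{KL}(MPM\|GPG)+D^\pi_{KL}(GPG\|Q)$ and $D^\pi_{KL}(BPB\|Q)=D^\pi_{KL}(BPB\|GPG)+D^\pi_{KL}(GPG\|Q)$, so $GPG$ is also the unique KL projection of $MPM$ and of $BPB$ onto $\mathbf{G}$. Taking $Q=\Pi$: $D^\pi_{KL}(P\|\Pi)\ge D^\pi_{KL}(GPG\|\Pi)$, $D^\pi_{KL}(MPM\|\Pi)\ge D^\pi_{KL}(GPG\|\Pi)$ and $D^\pi_{KL}(BPB\|\Pi)\ge D^\pi_{KL}(GPG\|\Pi)$.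
   Context: $\mathcal{S}(\pi)$ is the set of transition matrices $P$ with $\pi P=\pi$; $\Pi$ is the matrix all of whose rows equal $\pi$. For transition matrices $P,Q$, $D^\pi_{KL}(P\|Q)=\sum_{x,y}\pi(x)P(x,y)\log\frac{P(x,y)}{Q(x,y)}$ with convention $0\log(0/a)=0$. With $\mathcal{O}(x)$ the orbit of $x$: $G(x,y)=\pi(y)/\pi(\mathcal{O}(x))$ for $y\in\mathcal{O}(x)$, else $0$; $M(x,y)=\frac{1}{|\mathcal{O}(x)|-1}\min\{1,\pi(y)/\pi(x)\}$ for $y\in\mathcal{O}(x)\setminus\{x\}$, $0$ off the orbit, $M(x,x)=1-\sum_{y\ne x}M(x,y)$; $B$ is the same with acceptance $\pi(y)/(\pi(x)+\pi(y))$. *)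

theory Defs
  imports "HOL-Analysis.Analysis" "HOL-Algebra.Group_Action"
begin

definition stochastic :: "('x::finite \<Rightarrow> 'x \<Rightarrow> real) \<Rightarrow> bool" where
  "stochastic P \<longleftrightarrow> (\<forall>x y. 0 \<le> P x y) \<and> (\<forall>x. (\<Sum>y\<in>UNIV. P x y) = 1)"

definition stat_set :: "('x::finite \<Rightarrow> real) \<Rightarrow> ('x \<Rightarrow> 'x \<Rightarrow> real) set" where
  "stat_set \<pi> = {P. stochastic P \<and> (\<forall>y. (\<Sum>x\<in>UNIV. \<pi> x * P x y) = \<pi> y)}"

definition mmul :: "('x::finite \<Rightarrow> 'x \<Rightarrow> real) \<Rightarrow> ('x \<Rightarrow> 'x \<Rightarrow> real) \<Rightarrow> 'x \<Rightarrow> 'x \<Rightarrow> real" where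
  "mmul P Q x y = (\<Sum>z\<in>UNIV. P x z * Q z y)"

definition Pi_mat :: "('x \<Rightarrow> real) \<Rightarrow> 'x \<Rightarrow> 'x \<Rightarrow> real" where
  "Pi_mat \<pi> x y = \<pi> y"

definition KL :: "('x::finite \<Rightarrow> real) \<Rightarrow> ('x \<Rightarrow> 'x \<Rightarrow> real) \<Rightarrow> ('x \<Rightarrow> 'x \<Rightarrow> real) \<Rightarrow> ereal" where
  "KL \<pi> P Q =
     (if \<exists>x y. \<pi> x * P x y > 0 \<and> Q x y = 0 then \<infinity>
      else ereal (\<Sum>x\<in>UNIV. \<Sum>y\<in>UNIV.
              (if \<pi> x * P x y = 0 then 0 else \<pi> x * P x y * ln (P x y / Q x y))))"

(* Orbit kernels; orb x is the orbit of x *)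
definition gibbs_kernel :: "('x \<Rightarrow> real) \<Rightarrow> ('x \<Rightarrow> 'x set) \<Rightarrow> 'x \<Rightarrow> 'x \<Rightarrow> real" where
  "gibbs_kernel \<pi> orb x y = (if y \<in> orb x then \<pi> y / sum \<pi> (orb x) else 0)"

definition mh_kernel :: "('x \<Rightarrow> real) \<Rightarrow> ('x \<Rightarrow> 'x set) \<Rightarrow> 'x \<Rightarrow> 'x \<Rightarrow> real" where
  "mh_kernel \<pi> orb x y =
     (if y = x then 1 - (\<Sum>z\<in>orb x - {x}. (1 / (real (card (orb x)) - 1)) * min 1 (\<pi> z / \<pi> x))
      else if y \<in> orb x then (1 / (real (card (orb x)) - 1)) * min 1 (\<pi> y / \<pi> x)
      else 0)"

definition barker_kernel :: "('x \<Rightarrow> real) \<Rightarrow> ('x \<Rightarrow> 'x set) \<Rightarrow> 'x \<Rightarrow> 'x \<Rightarrow> real" where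
  "barker_kernel \<pi> orb x y =
     (if y = x then 1 - (\<Sum>z\<in>orb x - {x}. (1 / (real (card (orb x)) - 1)) * (\<pi> z / (\<pi> x + \<pi> z)))
      else if y \<in> orb x then (1 / (real (card (orb x)) - 1)) * (\<pi> y / (\<pi> x + \<pi> y))
      else 0)"

definition fixed_set :: "('x::finite \<Rightarrow> real) \<Rightarrow> ('x \<Rightarrow> 'x \<Rightarrow> real) \<Rightarrow> ('x \<Rightarrow> 'x \<Rightarrow> real) set" where
  "fixed_set \<pi> K = {Q \<in> stat_set \<pi>. mmul (mmul K Q) K = Q}"

end

theory Submission
  imports Defs
begin

text \<open>
  The matrix \<open>G P G\<close> averages \<open>P\<close> over pairs of orbits: \<open>(G P G)(x, y) / \<pi>(y)\<close> only depends
  on the orbits of \<open>x\<close> and \<open>y\<close>, and integrating a function of the two orbits against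
  \<open>\<pi>(x) (G P G)(x, y)\<close> gives the same result as integrating it against \<open>\<pi>(x) P(x, y)\<close>.
  For \<open>Q = G Q G\<close> the log-ratio \<open>ln ((G P G) / Q)\<close> is such a function, which splits
  \<open>D(P \<parallel> Q)\<close> into \<open>D(P \<parallel> G P G) + D(G P G \<parallel> Q)\<close>; Gibbs' inequality then makes \<open>G P G\<close> the
  unique minimiser. The kernels \<open>M\<close> and \<open>B\<close> are \<open>\<pi>\<close>-reversible and move only within orbits,
  so \<open>G\<close> absorbs them: \<open>G (M P M) G = G P G\<close>, and the same holds for \<open>M P M\<close> and \<open>B P B\<close>.
\<close>

section \<open>Transition matrices\<close>

lemma mmul_assoc: "mmul (mmul A B) C = mmul A (mmul B C)"
proof (intro ext)
  fix x y
  have "mmul (mmul A B) C x y = (\<Sum>w\<in>UNIV. \<Sum>z\<in>UNIV. A x z * B z w * C w y)"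
    unfolding mmul_def by (simp add: sum_distrib_right)
  also have "\<dots> = (\<Sum>z\<in>UNIV. \<Sum>w\<in>UNIV. A x z * B z w * C w y)"
    by (rule sum.swap)
  also have "\<dots> = mmul A (mmul B C) x y"
    unfolding mmul_def by (simp add: sum_distrib_left mult.assoc)
  finally show "mmul (mmul A B) C x y = mmul A (mmul B C) x y" .
qed

lemma mmul_nonneg:
  assumes "\<And>a b. 0 \<le> A a b" "\<And>a b. 0 \<le> B a b"
  shows "0 \<le> mmul A B x y"
  unfolding mmul_def using assms by (intro sum_nonneg mult_nonneg_nonneg)

lemma mmul_ge_entry:
  assumes "\<And>a b. 0 \<le> A a b" "\<And>a b. 0 \<le> B a b"
  shows "A x z * B z y \<le> mmul A B x y"
  unfolding mmul_def using assms by (intro member_le_sum mult_nonneg_nonneg) auto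

lemma stochastic_mmul:
  assumes "stochastic A" "stochastic B"
  shows "stochastic (mmul A B)"
proof -
  have A: "\<And>x y. 0 \<le> A x y" "\<And>x. (\<Sum>y\<in>UNIV. A x y) = 1"
    and B: "\<And>x y. 0 \<le> B x y" "\<And>x. (\<Sum>y\<in>UNIV. B x y) = 1"
    using assms unfolding stochastic_def by auto
  have "(\<Sum>y\<in>UNIV. mmul A B x y) = 1" for x
  proof -
    have "(\<Sum>y\<in>UNIV. mmul A B x y) = (\<Sum>z\<in>UNIV. \<Sum>y\<in>UNIV. A x z * B z y)"
      unfolding mmul_def by (rule sum.swap)
    also have "\<dots> = 1"
      by (simp add: sum_distrib_left[symmetric] A B)
    finally show ?thesis .
  qed
  then show ?thesis
    unfolding stochastic_def using A B by (auto intro: mmul_nonneg)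
qed

lemma stat_set_mmul:
  assumes "A \<in> stat_set \<pi>" "B \<in> stat_set \<pi>"
  shows "mmul A B \<in> stat_set \<pi>"
proof -
  have A: "\<And>y. (\<Sum>x\<in>UNIV. \<pi> x * A x y) = \<pi> y" and B: "\<And>y. (\<Sum>x\<in>UNIV. \<pi> x * B x y) = \<pi> y"
    using assms unfolding stat_set_def by auto
  have "(\<Sum>x\<in>UNIV. \<pi> x * mmul A B x y) = \<pi> y" for y
  proof -
    have "(\<Sum>x\<in>UNIV. \<pi> x * mmul A B x y) = (\<Sum>z\<in>UNIV. \<Sum>x\<in>UNIV. \<pi> x * A x z * B z y)"
      unfolding mmul_def by (subst sum.swap) (simp add: sum_distrib_left mult.assoc)
    also have "\<dots> = \<pi> y"
      by (simp add: sum_distrib_right[symmetric] A B)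
    finally show ?thesis .
  qed
  then show ?thesis
    using assms stochastic_mmul unfolding stat_set_def by auto
qed

lemma stat_set_stochastic: "P \<in> stat_set \<pi> \<Longrightarrow> stochastic P"
  unfolding stat_set_def by simp

lemma fixed_set_stochastic: "Q \<in> fixed_set \<pi> K \<Longrightarrow> stochastic Q"
  unfolding fixed_set_def using stat_set_stochastic by blast

lemma reversible_stochastic_in_stat_set:
  assumes "stochastic K" "\<And>x y. \<pi> x * K x y = \<pi> y * K y x"
  shows "K \<in> stat_set \<pi>"
proof -
  have "(\<Sum>x\<in>UNIV. \<pi> x * K x y) = \<pi> y" for y
  proof -
    have "(\<Sum>x\<in>UNIV. \<pi> x * K x y) = \<pi> y * (\<Sum>x\<in>UNIV. K y x)"
      unfolding sum_distrib_left by (rule sum.cong[OF refl assms(2)])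
    then show ?thesis
      using assms(1) unfolding stochastic_def by simp
  qed
  then show ?thesis
    using assms unfolding stat_set_def by auto
qed

section \<open>Kullback--Leibler divergence\<close>

definition kl_sum :: "('x::finite \<Rightarrow> real) \<Rightarrow> ('x \<Rightarrow> 'x \<Rightarrow> real) \<Rightarrow> ('x \<Rightarrow> 'x \<Rightarrow> real) \<Rightarrow> real"
  where "kl_sum \<pi> R Q = (\<Sum>x\<in>UNIV. \<Sum>y\<in>UNIV. \<pi> x * R x y * ln (R x y / Q x y))"

lemma KL_eq_kl_sum:
  "KL \<pi> R Q = (if \<exists>x y. \<pi> x * R x y > 0 \<and> Q x y = 0 then \<infinity> else ereal (kl_sum \<pi> R Q))"
proof -
  have "(if \<pi> x * R x y = 0 then 0 else \<pi> x * R x y * ln (R x y / Q x y))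
      = \<pi> x * R x y * ln (R x y / Q x y)" for x y
    by simp
  then show ?thesis
    unfolding KL_def kl_sum_def by presburger
qed

lemma diff_le_mult_ln_div:
  fixes r q :: real
  assumes "0 \<le> r" "0 \<le> q" "0 < r \<Longrightarrow> 0 < q"
  shows "r - q \<le> r * ln (r / q)" and "r * ln (r / q) = r - q \<Longrightarrow> r = q"
proof -
  have "r - q \<le> r * ln (r / q) \<and> (r * ln (r / q) = r - q \<longrightarrow> r = q)"
  proof (cases "r = 0")
    case False
    then have r: "0 < r" and q: "0 < q"
      using assms by auto
    have ln_inv: "ln (r / q) = - ln (q / r)"
      using r q by (simp add: ln_div)
    have "r * (1 - q / r) \<le> r * ln (r / q)"
      using ln_le_minus_one[of "q / r"] r q by (intro mult_left_mono) (auto simp: ln_inv)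
    moreover have "r * ln (r / q) = r - q \<Longrightarrow> r = q"
      using ln_eq_minus_one[of "q / r"] r q by (auto simp: ln_inv field_simps)
    moreover have "r * (1 - q / r) = r - q"
      using r by (simp add: field_simps)
    ultimately show ?thesis
      by simp
  qed (use assms in auto)
  then show "r - q \<le> r * ln (r / q)" and "r * ln (r / q) = r - q \<Longrightarrow> r = q"
    by auto
qed

lemma kl_sum_eq_sum_excess:
  assumes "stochastic R" "stochastic Q"
  shows "kl_sum \<pi> R Q
    = (\<Sum>x\<in>UNIV. \<Sum>y\<in>UNIV. \<pi> x * (R x y * ln (R x y / Q x y) - (R x y - Q x y)))"
proof -
  have "(\<Sum>x\<in>UNIV. \<Sum>y\<in>UNIV. \<pi> x * (R x y - Q x y)) = 0"
    using assms unfolding stochastic_def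
    by (simp add: sum_subtractf right_diff_distrib sum_distrib_left[symmetric])
  then show ?thesis
    unfolding kl_sum_def by (simp add: right_diff_distrib sum_subtractf mult.assoc)
qed

context
  fixes \<pi> :: "'x::finite \<Rightarrow> real" and R Q :: "'x \<Rightarrow> 'x \<Rightarrow> real"
  assumes pos: "\<And>x. 0 < \<pi> x" and R: "stochastic R" and Q: "stochastic Q"
begin

private lemma KL_finite_cases:
  assumes "\<not> (\<exists>x y. \<pi> x * R x y > 0 \<and> Q x y = 0)"
  shows "KL \<pi> R Q = ereal (kl_sum \<pi> R Q)"
    and "\<And>x y. R x y - Q x y \<le> R x y * ln (R x y / Q x y)"
    and "\<And>x y. R x y * ln (R x y / Q x y) = R x y - Q x y \<Longrightarrow> R x y = Q x y"
proof -
  have "0 < R x y \<Longrightarrow> 0 < Q x y" for x y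
    using assms pos[of x] Q unfolding stochastic_def by (metis less_eq_real_def mult_pos_pos)
  then show "\<And>x y. R x y - Q x y \<le> R x y * ln (R x y / Q x y)"
    and "\<And>x y. R x y * ln (R x y / Q x y) = R x y - Q x y \<Longrightarrow> R x y = Q x y"
    using R Q diff_le_mult_ln_div unfolding stochastic_def by blast+
qed (use assms in \<open>simp add: KL_eq_kl_sum\<close>)

lemma KL_nonneg: "0 \<le> KL \<pi> R Q"
proof (cases "\<exists>x y. \<pi> x * R x y > 0 \<and> Q x y = 0")
  case False
  have "0 \<le> kl_sum \<pi> R Q"
    unfolding kl_sum_eq_sum_excess[OF R Q]
    using pos KL_finite_cases(2)[OF False] by (intro sum_nonneg mult_nonneg_nonneg) (auto intro: less_imp_le)
  then show ?thesis
    using KL_finite_cases(1)[OF False] by simp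
qed (simp add: KL_eq_kl_sum)

lemma KL_eq_0_imp_eq:
  assumes "KL \<pi> R Q = 0"
  shows "R = Q"
proof (intro ext)
  fix x y
  have finite: "\<not> (\<exists>x y. \<pi> x * R x y > 0 \<and> Q x y = 0)"
    using assms by (auto simp: KL_eq_kl_sum split: if_splits)
  define excess where "excess x y = \<pi> x * (R x y * ln (R x y / Q x y) - (R x y - Q x y))" for x y
  have excess_nonneg: "0 \<le> excess a b" for a b
    unfolding excess_def using pos KL_finite_cases(2)[OF finite] by (intro mult_nonneg_nonneg) (auto intro: less_imp_le)
  have "(\<Sum>a\<in>UNIV. \<Sum>b\<in>UNIV. excess a b) = 0"
    using assms KL_finite_cases(1)[OF finite] kl_sum_eq_sum_excess[OF R Q]
    unfolding excess_def by (simp add: zero_ereal_def)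
  then have "excess x y = 0"
    using excess_nonneg by (simp add: sum_nonneg sum_nonneg_eq_0_iff)
  then show "R x y = Q x y"
    using pos[of x] KL_finite_cases(3)[OF finite] unfolding excess_def by simp
qed

end

lemma ex_mass_on_zeros_iff_sum:
  fixes \<pi> :: "'x::finite \<Rightarrow> real" and A Q :: "'x \<Rightarrow> 'x \<Rightarrow> real"
  assumes "\<And>x. 0 \<le> \<pi> x" "\<And>x y. 0 \<le> A x y"
  shows "(\<exists>x y. \<pi> x * A x y > 0 \<and> Q x y = 0)
    \<longleftrightarrow> (\<Sum>x\<in>UNIV. \<Sum>y\<in>UNIV. \<pi> x * A x y * of_bool (Q x y = 0)) \<noteq> 0"
proof -
  define f where "f x y = \<pi> x * A x y * of_bool (Q x y = 0)" for x y
  have nonneg: "0 \<le> f x y" for x y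
    unfolding f_def using assms by simp
  have "(\<Sum>x\<in>UNIV. \<Sum>y\<in>UNIV. f x y) = 0 \<longleftrightarrow> (\<forall>x y. f x y = 0)"
    by (simp add: sum_nonneg_eq_0_iff sum_nonneg nonneg)
  moreover have "f x y = 0 \<longleftrightarrow> \<not> (\<pi> x * A x y > 0 \<and> Q x y = 0)" for x y
    unfolding f_def using assms[of x] by (auto simp: less_le)
  ultimately show ?thesis
    unfolding f_def by auto
qed

section \<open>Kernels on a partition into orbits\<close>

locale weighted_partition =
  fixes \<pi> :: "'x::finite \<Rightarrow> real" and orb :: "'x \<Rightarrow> 'x set"
  assumes pos: "\<And>x. 0 < \<pi> x"
    and mem_orb_self: "\<And>x. x \<in> orb x"
    and mem_orb_iff: "\<And>x y. y \<in> orb x \<longleftrightarrow> orb y = orb x"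
begin

abbreviation Gk :: "'x \<Rightarrow> 'x \<Rightarrow> real" where
  "Gk \<equiv> gibbs_kernel \<pi> orb"

definition orbit_kernel :: "('x \<Rightarrow> 'x \<Rightarrow> real) \<Rightarrow> bool" where
  "orbit_kernel K \<longleftrightarrow> stochastic K \<and> (\<forall>x y. K x y \<noteq> 0 \<longrightarrow> y \<in> orb x)
     \<and> (\<forall>x y. \<pi> x * K x y = \<pi> y * K y x)"

lemma mem_orb_commute: "y \<in> orb x \<longleftrightarrow> x \<in> orb y"
  using mem_orb_iff mem_orb_self by metis

lemma sum_orb_pos: "0 < sum \<pi> (orb x)"
  using mem_orb_self[of x] pos by (intro sum_pos) auto

lemma one_le_card_orb: "1 \<le> card (orb x)"
  using mem_orb_self[of x] card_gt_0_iff[of "orb x"] by fastforce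

lemma gibbs_kernel_reversible: "\<pi> x * Gk x y = \<pi> y * Gk y x"
  using mem_orb_iff[of y x] mem_orb_commute[of y x] by (simp add: gibbs_kernel_def)

lemma gibbs_kernel_nonneg: "0 \<le> Gk x y"
  using pos[of y] sum_orb_pos[of x] by (simp add: gibbs_kernel_def less_imp_le)

lemma gibbs_kernel_orbit_kernel: "orbit_kernel Gk"
proof -
  have "(\<Sum>y\<in>UNIV. Gk x y) = 1" for x
  proof -
    have "(\<Sum>y\<in>UNIV. Gk x y) = (\<Sum>y\<in>orb x. \<pi> y / sum \<pi> (orb x))"
      unfolding gibbs_kernel_def by (simp add: sum.If_cases)
    also have "\<dots> = 1"
      using sum_orb_pos[of x] by (simp add: sum_divide_distrib[symmetric])
    finally show ?thesis .
  qed
  then show ?thesis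
    unfolding orbit_kernel_def stochastic_def
    using gibbs_kernel_nonneg gibbs_kernel_reversible by (auto simp: gibbs_kernel_def split: if_splits)
qed

lemma orbit_kernel_stat_set: "orbit_kernel K \<Longrightarrow> K \<in> stat_set \<pi>"
  unfolding orbit_kernel_def by (blast intro: reversible_stochastic_in_stat_set)

lemma orbit_kernel_mmul_gibbs:
  assumes "orbit_kernel K"
  shows "mmul K Gk = Gk"
proof (intro ext)
  fix x y
  have K: "stochastic K" "\<And>x y. K x y \<noteq> 0 \<Longrightarrow> y \<in> orb x"
    using assms unfolding orbit_kernel_def by auto
  have column: "K x z * Gk z y = K x z * Gk x y" for z
  proof (cases "K x z = 0")
    case False
    then have "orb z = orb x"
      using K(2) mem_orb_iff by blast
    then show ?thesis
      by (simp add: gibbs_kernel_def)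
  qed simp
  have "mmul K Gk x y = (\<Sum>z\<in>UNIV. K x z) * Gk x y"
    by (simp only: mmul_def sum_distrib_right column)
  then show "mmul K Gk x y = Gk x y"
    using K(1) unfolding stochastic_def by simp
qed

lemma gibbs_mmul_orbit_kernel:
  assumes "orbit_kernel K"
  shows "mmul Gk K = Gk"
proof (intro ext)
  fix x y
  have K: "stochastic K" "\<And>x y. K x y \<noteq> 0 \<Longrightarrow> y \<in> orb x" "\<And>x y. \<pi> x * K x y = \<pi> y * K y x"
    using assms unfolding orbit_kernel_def by auto
  have "Gk x z * K z y = (if z \<in> orb x then \<pi> y / sum \<pi> (orb x) * K y z else 0)" for z
    using K(3)[of z y] by (simp add: gibbs_kernel_def field_simps)
  then have "mmul Gk K x y = \<pi> y / sum \<pi> (orb x) * (\<Sum>z\<in>orb x. K y z)"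
    unfolding mmul_def by (simp add: sum.If_cases sum_distrib_left)
  also have "\<dots> = Gk x y"
  proof (cases "y \<in> orb x")
    case True
    then have "(\<Sum>z\<in>orb x. K y z) = (\<Sum>z\<in>UNIV. K y z)"
      using K(2) mem_orb_iff by (intro sum.mono_neutral_left) auto
    then show ?thesis
      using True K(1) unfolding stochastic_def by (simp add: gibbs_kernel_def)
  next
    case False
    then have "K y z = 0" if "z \<in> orb x" for z
      using that K(2)[of y z] mem_orb_iff by metis
    then show ?thesis
      using False by (simp add: gibbs_kernel_def)
  qed
  finally show "mmul Gk K x y = Gk x y" .
qed

lemma gibbs_sandwich_orbit_kernel:
  assumes "orbit_kernel K"
  shows "mmul (mmul Gk (mmul (mmul K P) K)) Gk = mmul (mmul Gk P) Gk"
proof -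
  have "mmul Gk (mmul K X) = mmul Gk X" for X
    using gibbs_mmul_orbit_kernel[OF assms] by (simp add: mmul_assoc[symmetric])
  then show ?thesis
    using orbit_kernel_mmul_gibbs[OF assms] by (simp add: mmul_assoc)
qed

lemma gibbs_sandwich_in_fixed_set:
  assumes "P \<in> stat_set \<pi>"
  shows "mmul (mmul Gk P) Gk \<in> fixed_set \<pi> Gk"
  unfolding fixed_set_def
  using assms orbit_kernel_stat_set[OF gibbs_kernel_orbit_kernel]
    gibbs_sandwich_orbit_kernel[OF gibbs_kernel_orbit_kernel]
  by (simp add: stat_set_mmul)

lemma Pi_mat_in_fixed_set:
  assumes "(\<Sum>x\<in>UNIV. \<pi> x) = 1"
  shows "Pi_mat \<pi> \<in> fixed_set \<pi> Gk"
proof -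
  have "Pi_mat \<pi> \<in> stat_set \<pi>"
    using assms pos unfolding stat_set_def stochastic_def Pi_mat_def
    by (auto simp: less_imp_le sum_distrib_right[symmetric])
  moreover have "mmul Gk (Pi_mat \<pi>) = Pi_mat \<pi>"
    using gibbs_kernel_orbit_kernel unfolding orbit_kernel_def stochastic_def
    by (intro ext) (simp add: mmul_def Pi_mat_def sum_distrib_right[symmetric])
  moreover have "mmul (Pi_mat \<pi>) Gk = Pi_mat \<pi>"
    using orbit_kernel_stat_set[OF gibbs_kernel_orbit_kernel] unfolding stat_set_def
    by (intro ext) (simp add: mmul_def Pi_mat_def)
  ultimately show ?thesis
    unfolding fixed_set_def by simp
qed

definition orbit_rate_kernel :: "('x \<Rightarrow> 'x \<Rightarrow> real) \<Rightarrow> 'x \<Rightarrow> 'x \<Rightarrow> real" where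
  "orbit_rate_kernel w x y =
     (if y = x then 1 - (\<Sum>z\<in>orb x - {x}. w x z) else if y \<in> orb x then w x y else 0)"

lemma orbit_rate_kernel_orbit_kernel:
  assumes nonneg: "\<And>x z. 0 \<le> w x z"
    and bounded: "\<And>x z. w x z \<le> 1 / (real (card (orb x)) - 1)"
    and reversible: "\<And>x y. y \<in> orb x \<Longrightarrow> \<pi> x * w x y = \<pi> y * w y x"
  shows "orbit_kernel (orbit_rate_kernel w)"
proof -
  have "(\<Sum>z\<in>orb x - {x}. w x z) \<le> 1" for x
  proof -
    have "(\<Sum>z\<in>orb x - {x}. w x z) \<le> (\<Sum>z\<in>orb x - {x}. 1 / (real (card (orb x)) - 1))"
      by (rule sum_mono) (rule bounded)
    also have "\<dots> = (real (card (orb x)) - 1) * (1 / (real (card (orb x)) - 1))"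
      using mem_orb_self[of x] one_le_card_orb[of x] by (simp add: card_Diff_singleton of_nat_diff)
    also have "\<dots> \<le> 1" \<comment> \<open>on a singleton orbit both factors are \<open>0\<close>, as \<open>1 / 0 = 0\<close>\<close>
      by (cases "real (card (orb x)) - 1 = 0") simp_all
    finally show ?thesis .
  qed
  then have "0 \<le> orbit_rate_kernel w x y" for x y
    using nonneg unfolding orbit_rate_kernel_def by auto
  moreover have "(\<Sum>y\<in>UNIV. orbit_rate_kernel w x y) = 1" for x
  proof -
    have "(\<Sum>y\<in>UNIV - {x}. orbit_rate_kernel w x y) = (\<Sum>y\<in>orb x - {x}. w x y)"
      unfolding orbit_rate_kernel_def by (intro sum.mono_neutral_cong_right) auto
    then show ?thesis
      by (simp add: sum.remove[of UNIV x] orbit_rate_kernel_def)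
  qed
  moreover have "orbit_rate_kernel w x y \<noteq> 0 \<Longrightarrow> y \<in> orb x" for x y
    using mem_orb_self[of x] unfolding orbit_rate_kernel_def by (auto split: if_splits)
  moreover have "\<pi> x * orbit_rate_kernel w x y = \<pi> y * orbit_rate_kernel w y x" for x y
    using reversible[of x y] mem_orb_commute[of y x]
    by (cases "x = y") (auto simp: orbit_rate_kernel_def)
  ultimately show ?thesis
    unfolding orbit_kernel_def stochastic_def by blast
qed

lemma mh_kernel_orbit_kernel: "orbit_kernel (mh_kernel \<pi> orb)"
proof -
  let ?w = "\<lambda>x z. 1 / (real (card (orb x)) - 1) * min 1 (\<pi> z / \<pi> x)"
  have "mh_kernel \<pi> orb = orbit_rate_kernel ?w"
    by (intro ext) (simp add: mh_kernel_def orbit_rate_kernel_def)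
  moreover have "orbit_kernel (orbit_rate_kernel ?w)"
  proof (rule orbit_rate_kernel_orbit_kernel)
    fix x z
    have card: "0 \<le> 1 / (real (card (orb x)) - 1)"
      using one_le_card_orb[of x] by simp
    then show "0 \<le> ?w x z"
      using pos[of x] pos[of z] by simp
    show "?w x z \<le> 1 / (real (card (orb x)) - 1)"
      using mult_left_mono[OF min.cobounded1 card] by simp
  next
    fix x y
    assume "y \<in> orb x"
    then have "orb y = orb x"
      using mem_orb_iff by blast
    moreover have "\<pi> x * min 1 (\<pi> y / \<pi> x) = \<pi> y * min 1 (\<pi> x / \<pi> y)"
      using pos[of x] pos[of y] by (simp add: min_mult_distrib_left min.commute)
    ultimately show "\<pi> x * ?w x y = \<pi> y * ?w y x"
      by (metis mult.left_commute)
  qed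
  ultimately show ?thesis
    by simp
qed

lemma barker_kernel_orbit_kernel: "orbit_kernel (barker_kernel \<pi> orb)"
proof -
  let ?w = "\<lambda>x z. 1 / (real (card (orb x)) - 1) * (\<pi> z / (\<pi> x + \<pi> z))"
  have "barker_kernel \<pi> orb = orbit_rate_kernel ?w"
    by (intro ext) (simp add: barker_kernel_def orbit_rate_kernel_def)
  moreover have "orbit_kernel (orbit_rate_kernel ?w)"
  proof (rule orbit_rate_kernel_orbit_kernel)
    fix x z
    have card: "0 \<le> 1 / (real (card (orb x)) - 1)"
      using one_le_card_orb[of x] by simp
    then show "0 \<le> ?w x z"
      using pos[of x] pos[of z] by (simp add: less_imp_le)
    have "\<pi> z / (\<pi> x + \<pi> z) \<le> 1"
      using pos[of x] pos[of z] by simp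
    from mult_left_mono[OF this card]
    show "?w x z \<le> 1 / (real (card (orb x)) - 1)"
      by simp
  next
    fix x y
    assume "y \<in> orb x"
    then have "orb y = orb x"
      using mem_orb_iff by blast
    moreover have "\<pi> x * (\<pi> y / (\<pi> x + \<pi> y)) = \<pi> y * (\<pi> x / (\<pi> y + \<pi> x))"
      by (simp add: ac_simps)
    ultimately show "\<pi> x * ?w x y = \<pi> y * ?w y x"
      by (metis mult.left_commute)
  qed
  ultimately show ?thesis
    by simp
qed

section \<open>The Pythagorean identity\<close>

lemma gibbs_sandwich_scaling:
  assumes "orb x = orb x'" "orb y = orb y'"
  shows "mmul (mmul Gk A) Gk x' y' * \<pi> y = mmul (mmul Gk A) Gk x y * \<pi> y'"
proof -
  have "mmul Gk A x' w = mmul Gk A x w" for w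
    unfolding mmul_def gibbs_kernel_def assms(1) ..
  moreover have "Gk w y' * \<pi> y = Gk w y * \<pi> y'" for w
    using mem_orb_iff[of y' w] mem_orb_iff[of y w] assms(2) by (simp add: gibbs_kernel_def)
  ultimately show ?thesis
    unfolding mmul_def[of "mmul Gk A"] sum_distrib_right by (simp add: mult.assoc)
qed

lemma sum_gibbs_kernel_row:
  assumes "\<And>y. y \<in> orb w \<Longrightarrow> g y = g w"
  shows "(\<Sum>y\<in>UNIV. Gk w y * g y) = g w"
proof -
  have "(\<Sum>y\<in>UNIV. Gk w y * g y) = (\<Sum>y\<in>orb w. \<pi> y / sum \<pi> (orb w) * g w)"
    using assms by (simp add: gibbs_kernel_def sum.If_cases if_distrib[of "\<lambda>a. a * _"])
  also have "\<dots> = g w"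
    using sum_orb_pos[of w] by (simp add: sum_distrib_right[symmetric] sum_divide_distrib[symmetric])
  finally show ?thesis .
qed

lemma sum_mmul_gibbs_kernel_right:
  assumes "\<And>y w. y \<in> orb w \<Longrightarrow> g y = g w"
  shows "(\<Sum>y\<in>UNIV. mmul A Gk x y * g y) = (\<Sum>w\<in>UNIV. A x w * g w)"
proof -
  have "(\<Sum>y\<in>UNIV. mmul A Gk x y * g y) = (\<Sum>w\<in>UNIV. \<Sum>y\<in>UNIV. A x w * (Gk w y * g y))"
    unfolding mmul_def by (subst sum.swap) (simp add: sum_distrib_right mult.assoc)
  also have "\<dots> = (\<Sum>w\<in>UNIV. A x w * g w)"
    using sum_gibbs_kernel_row assms by (simp add: sum_distrib_left[symmetric])
  finally show ?thesis .
qed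

lemma sum_mmul_gibbs_kernel_left:
  assumes "\<And>x z. x \<in> orb z \<Longrightarrow> g x = g z"
  shows "(\<Sum>x\<in>UNIV. \<pi> x * mmul Gk A x y * g x) = (\<Sum>z\<in>UNIV. \<pi> z * A z y * g z)"
proof -
  have "(\<Sum>x\<in>UNIV. \<pi> x * mmul Gk A x y * g x) = (\<Sum>x\<in>UNIV. \<Sum>z\<in>UNIV. A z y * (\<pi> x * Gk x z * g x))"
    unfolding mmul_def by (simp add: sum_distrib_left sum_distrib_right ac_simps)
  also have "\<dots> = (\<Sum>z\<in>UNIV. A z y * (\<Sum>x\<in>UNIV. \<pi> x * Gk x z * g x))"
    by (subst sum.swap) (simp add: sum_distrib_left)
  also have "\<dots> = (\<Sum>z\<in>UNIV. A z y * (\<pi> z * (\<Sum>x\<in>UNIV. Gk z x * g x)))"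
    by (simp add: gibbs_kernel_reversible sum_distrib_left mult.assoc)
  also have "\<dots> = (\<Sum>z\<in>UNIV. \<pi> z * A z y * g z)"
    using sum_gibbs_kernel_row assms by (simp add: ac_simps)
  finally show ?thesis .
qed

lemma sum_gibbs_sandwich:
  assumes "\<And>x x' y y'. orb x = orb x' \<Longrightarrow> orb y = orb y' \<Longrightarrow> f x y = f x' y'"
  shows "(\<Sum>x\<in>UNIV. \<Sum>y\<in>UNIV. \<pi> x * mmul (mmul Gk A) Gk x y * f x y)
       = (\<Sum>x\<in>UNIV. \<Sum>y\<in>UNIV. \<pi> x * A x y * f x y)"
proof -
  have row: "f x y = f x w" and column: "f y x = f w x" if "y \<in> orb w" for x y w
    using assms mem_orb_iff that by blast+
  have "(\<Sum>x\<in>UNIV. \<Sum>y\<in>UNIV. \<pi> x * mmul (mmul Gk A) Gk x y * f x y)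
      = (\<Sum>x\<in>UNIV. \<pi> x * (\<Sum>y\<in>UNIV. mmul (mmul Gk A) Gk x y * f x y))"
    by (simp add: sum_distrib_left mult.assoc)
  also have "\<dots> = (\<Sum>x\<in>UNIV. \<pi> x * (\<Sum>y\<in>UNIV. mmul Gk A x y * f x y))"
    using sum_mmul_gibbs_kernel_right[of "f _"] row by simp
  also have "\<dots> = (\<Sum>y\<in>UNIV. \<Sum>x\<in>UNIV. \<pi> x * mmul Gk A x y * f x y)"
    by (subst sum.swap) (simp add: sum_distrib_left mult.assoc)
  also have "\<dots> = (\<Sum>y\<in>UNIV. \<Sum>x\<in>UNIV. \<pi> x * A x y * f x y)"
    using sum_mmul_gibbs_kernel_left[of "\<lambda>x. f x _"] column by simp
  also have "\<dots> = (\<Sum>x\<in>UNIV. \<Sum>y\<in>UNIV. \<pi> x * A x y * f x y)"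
    by (rule sum.swap)
  finally show ?thesis .
qed

lemma gibbs_sandwich_nonneg:
  assumes "\<And>a b. 0 \<le> R a b"
  shows "0 \<le> mmul (mmul Gk R) Gk x y"
  using assms gibbs_kernel_nonneg by (intro mmul_nonneg) auto

lemma gibbs_sandwich_stochastic:
  assumes "stochastic R"
  shows "stochastic (mmul (mmul Gk R) Gk)"
  using assms gibbs_kernel_orbit_kernel unfolding orbit_kernel_def by (simp add: stochastic_mmul)

lemma gibbs_sandwich_pos:
  assumes "\<And>a b. 0 \<le> R a b" "0 < R x y"
  shows "0 < mmul (mmul Gk R) Gk x y"
proof -
  have diag: "0 < Gk a a" for a
    using mem_orb_self[of a] pos[of a] sum_orb_pos[of a] by (simp add: gibbs_kernel_def)
  have "0 < Gk x x * R x y * Gk y y"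
    using diag assms(2) by simp
  also have "\<dots> \<le> mmul Gk R x y * Gk y y"
    using mmul_ge_entry[of Gk R x x y] gibbs_kernel_nonneg assms(1) diag[of y]
    by (intro mult_right_mono) auto
  also have "\<dots> \<le> mmul (mmul Gk R) Gk x y"
    using mmul_ge_entry[of "mmul Gk R" Gk] gibbs_kernel_nonneg assms(1) mmul_nonneg by blast
  finally show ?thesis .
qed

lemma KL_gibbs_sandwich_finite:
  assumes "\<And>a b. 0 \<le> R a b"
  shows "KL \<pi> R (mmul (mmul Gk R) Gk) = ereal (kl_sum \<pi> R (mmul (mmul Gk R) Gk))"
proof -
  have "0 < R x y" if "0 < \<pi> x * R x y" for x y
    using that pos[of x] assms by (simp add: zero_less_mult_iff)
  then show ?thesis
    using gibbs_sandwich_pos[OF assms] by (force simp: KL_eq_kl_sum)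
qed

lemma gibbs_sandwich_mass_on_zeros_iff:
  assumes R: "\<And>a b. 0 \<le> R a b" and Q: "mmul (mmul Gk Q) Gk = Q"
  shows "(\<exists>x y. \<pi> x * mmul (mmul Gk R) Gk x y > 0 \<and> Q x y = 0)
     \<longleftrightarrow> (\<exists>x y. \<pi> x * R x y > 0 \<and> Q x y = 0)"
proof -
  have zero_invariant: "of_bool (Q x y = 0) = (of_bool (Q x' y' = 0) :: real)"
    if "orb x = orb x'" "orb y = orb y'" for x x' y y'
  proof -
    have "Q x' y' * \<pi> y = Q x y * \<pi> y'"
      using gibbs_sandwich_scaling[OF that, of Q] unfolding Q .
    moreover have "\<pi> y \<noteq> 0" "\<pi> y' \<noteq> 0"
      using pos[of y] pos[of y'] by simp_all
    ultimately show ?thesis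
      by auto
  qed
  have \<pi>_nonneg: "\<And>x. 0 \<le> \<pi> x"
    using pos less_imp_le by blast
  have "(\<Sum>x\<in>UNIV. \<Sum>y\<in>UNIV. \<pi> x * mmul (mmul Gk R) Gk x y * of_bool (Q x y = 0))
      = (\<Sum>x\<in>UNIV. \<Sum>y\<in>UNIV. \<pi> x * R x y * of_bool (Q x y = 0))"
    by (rule sum_gibbs_sandwich) (rule zero_invariant)
  then show ?thesis
    unfolding ex_mass_on_zeros_iff_sum[OF \<pi>_nonneg R]
      ex_mass_on_zeros_iff_sum[OF \<pi>_nonneg gibbs_sandwich_nonneg[OF R]]
    by simp
qed

lemma kl_sum_pythagorean:
  assumes R: "\<And>a b. 0 \<le> R a b" and Q: "\<And>a b. 0 \<le> Q a b" "mmul (mmul Gk Q) Gk = Q"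
    and finite: "\<not> (\<exists>x y. \<pi> x * R x y > 0 \<and> Q x y = 0)"
  defines "H \<equiv> mmul (mmul Gk R) Gk"
  shows "kl_sum \<pi> R Q = kl_sum \<pi> R H + kl_sum \<pi> H Q"
proof -
  define g where "g x y = ln (H x y / Q x y)" for x y
  have g_invariant: "g x y = g x' y'" if "orb x = orb x'" "orb y = orb y'" for x x' y y'
  proof -
    have "H x' y' = H x y * (\<pi> y' / \<pi> y)" "Q x' y' = Q x y * (\<pi> y' / \<pi> y)"
      using gibbs_sandwich_scaling[OF that, of R] gibbs_sandwich_scaling[OF that, of Q] Q(2) pos[of y]
      unfolding H_def by (simp_all add: field_simps)
    then show ?thesis
      using pos[of y] pos[of y'] unfolding g_def by simp
  qed
  have split: "\<pi> x * R x y * ln (R x y / Q x y)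
      = \<pi> x * R x y * ln (R x y / H x y) + \<pi> x * R x y * g x y" for x y
  proof (cases "R x y = 0")
    case False
    then have r: "0 < R x y"
      using R[of x y] by simp
    moreover have "0 < Q x y"
      using r finite pos[of x] Q(1)[of x y] by (metis less_eq_real_def mult_pos_pos)
    moreover have "0 < H x y"
      using gibbs_sandwich_pos[of R, OF R r] unfolding H_def .
    ultimately show ?thesis
      unfolding g_def by (simp add: ln_div algebra_simps)
  qed simp
  have "kl_sum \<pi> R Q = kl_sum \<pi> R H + (\<Sum>x\<in>UNIV. \<Sum>y\<in>UNIV. \<pi> x * R x y * g x y)"
    unfolding kl_sum_def split by (simp add: sum.distrib)
  also have "(\<Sum>x\<in>UNIV. \<Sum>y\<in>UNIV. \<pi> x * R x y * g x y) = (\<Sum>x\<in>UNIV. \<Sum>y\<in>UNIV. \<pi> x * H x y * g x y)"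
    unfolding H_def using g_invariant by (intro sum_gibbs_sandwich[symmetric]) blast
  also have "\<dots> = kl_sum \<pi> H Q"
    unfolding kl_sum_def g_def ..
  finally show ?thesis .
qed

lemma KL_pythagorean:
  assumes R: "\<And>a b. 0 \<le> R a b" and Q: "\<And>a b. 0 \<le> Q a b" "mmul (mmul Gk Q) Gk = Q"
  shows "KL \<pi> R Q = KL \<pi> R (mmul (mmul Gk R) Gk) + KL \<pi> (mmul (mmul Gk R) Gk) Q"
  using gibbs_sandwich_mass_on_zeros_iff[OF R Q(2)] KL_gibbs_sandwich_finite[OF R]
    kl_sum_pythagorean[OF R Q]
  by (cases "\<exists>x y. \<pi> x * R x y > 0 \<and> Q x y = 0") (simp_all add: KL_eq_kl_sum)

lemma KL_pythagorean_fixed_set: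
  assumes "stochastic R" "Q \<in> fixed_set \<pi> Gk"
  shows "KL \<pi> R Q = KL \<pi> R (mmul (mmul Gk R) Gk) + KL \<pi> (mmul (mmul Gk R) Gk) Q"
  using assms unfolding fixed_set_def stat_set_def stochastic_def
  by (intro KL_pythagorean) auto

lemma KL_gibbs_sandwich_eq_INF:
  assumes "P \<in> stat_set \<pi>"
  shows "KL \<pi> P (mmul (mmul Gk P) Gk) = (INF Q\<in>fixed_set \<pi> Gk. KL \<pi> P Q)"
proof (rule antisym)
  have P: "stochastic P"
    using assms by (rule stat_set_stochastic)
  show "KL \<pi> P (mmul (mmul Gk P) Gk) \<le> (INF Q\<in>fixed_set \<pi> Gk. KL \<pi> P Q)"
  proof (rule INF_greatest)
    fix Q
    assume Q: "Q \<in> fixed_set \<pi> Gk"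
    have "0 \<le> KL \<pi> (mmul (mmul Gk P) Gk) Q"
      using pos gibbs_sandwich_stochastic[OF P] fixed_set_stochastic[OF Q] by (rule KL_nonneg)
    then show "KL \<pi> P (mmul (mmul Gk P) Gk) \<le> KL \<pi> P Q"
      unfolding KL_pythagorean_fixed_set[OF P Q] by (rule add_increasing2) simp
  qed
  show "(INF Q\<in>fixed_set \<pi> Gk. KL \<pi> P Q) \<le> KL \<pi> P (mmul (mmul Gk P) Gk)"
    by (rule INF_lower[OF gibbs_sandwich_in_fixed_set[OF assms]])
qed

lemma KL_gibbs_sandwich_unique:
  assumes P: "stochastic P" and Q: "Q \<in> fixed_set \<pi> Gk"
    and eq: "KL \<pi> P Q = KL \<pi> P (mmul (mmul Gk P) Gk)"
  shows "Q = mmul (mmul Gk P) Gk"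
proof -
  have P_nonneg: "\<And>a b. 0 \<le> P a b"
    using P unfolding stochastic_def by simp
  have "ereal (kl_sum \<pi> P (mmul (mmul Gk P) Gk)) + KL \<pi> (mmul (mmul Gk P) Gk) Q
      = ereal (kl_sum \<pi> P (mmul (mmul Gk P) Gk))"
    using eq KL_pythagorean_fixed_set[OF P Q] KL_gibbs_sandwich_finite[OF P_nonneg] by simp
  then have "KL \<pi> (mmul (mmul Gk P) Gk) Q = 0"
    by (cases "KL \<pi> (mmul (mmul Gk P) Gk) Q") auto
  from KL_eq_0_imp_eq[OF pos gibbs_sandwich_stochastic[OF P] fixed_set_stochastic[OF Q] this]
  show ?thesis
    by simp
qed

lemma KL_Pi_mat_gibbs_sandwich_le:
  assumes "(\<Sum>x\<in>UNIV. \<pi> x) = 1" "stochastic P"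
  shows "KL \<pi> (mmul (mmul Gk P) Gk) (Pi_mat \<pi>) \<le> KL \<pi> P (Pi_mat \<pi>)"
proof -
  have "0 \<le> KL \<pi> P (mmul (mmul Gk P) Gk)"
    using pos assms(2) gibbs_sandwich_stochastic[OF assms(2)] by (rule KL_nonneg)
  then show ?thesis
    unfolding KL_pythagorean_fixed_set[OF assms(2) Pi_mat_in_fixed_set[OF assms(1)]]
    by (rule add_increasing) simp
qed

lemma KL_projection_onto_fixed_set:
  assumes "(\<Sum>x\<in>UNIV. \<pi> x) = 1" "R \<in> stat_set \<pi>" "mmul (mmul Gk R) Gk = H"
  shows "(\<forall>Q\<in>fixed_set \<pi> Gk. KL \<pi> R Q = KL \<pi> R H + KL \<pi> H Q)
    \<and> KL \<pi> R H = (INF Q\<in>fixed_set \<pi> Gk. KL \<pi> R Q)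
    \<and> (\<forall>Q\<in>fixed_set \<pi> Gk. KL \<pi> R Q = KL \<pi> R H \<longrightarrow> Q = H)
    \<and> KL \<pi> H (Pi_mat \<pi>) \<le> KL \<pi> R (Pi_mat \<pi>)"
  using assms stat_set_stochastic[OF assms(2)] KL_pythagorean_fixed_set KL_gibbs_sandwich_eq_INF KL_gibbs_sandwich_unique
      KL_Pi_mat_gibbs_sandwich_le by blast

end

lemma (in group_action) mem_orbit_iff_orbit_eq:
  assumes "x \<in> E" "y \<in> E"
  shows "y \<in> orbit G \<phi> x \<longleftrightarrow> orbit G \<phi> y = orbit G \<phi> x"
proof
  have orbit_subset: "orbit G \<phi> a \<subseteq> E" if "a \<in> E" for a
    using that element_image unfolding orbit_def by blast
  have orbit_mono: "orbit G \<phi> b \<subseteq> orbit G \<phi> a" if "a \<in> E" "b \<in> orbit G \<phi> a" for a b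
    using that orbit_subset orbit_trans by blast
  assume "y \<in> orbit G \<phi> x"
  moreover from this have "x \<in> orbit G \<phi> y"
    using assms orbit_sym by blast
  ultimately show "orbit G \<phi> y = orbit G \<phi> x"
    using assms orbit_mono by blast
next
  assume "orbit G \<phi> y = orbit G \<phi> x"
  then show "y \<in> orbit G \<phi> x"
    using orbit_refl[OF assms(2)] by simp
qed

theorem proposition5p3:
  fixes \<pi> :: "'x::finite \<Rightarrow> real"
    and Grp :: "('g, 'm) monoid_scheme" and \<phi> :: "'g \<Rightarrow> 'x \<Rightarrow> 'x"
  assumes pos: "\<forall>x. \<pi> x > 0"
    and pmf: "(\<Sum>x\<in>UNIV. \<pi> x) = 1"
    and act: "group_action Grp UNIV \<phi>"
  defines "orb \<equiv> (\<lambda>x. orbit Grp \<phi> x)"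
  defines "G \<equiv> gibbs_kernel \<pi> orb"
    and "M \<equiv> mh_kernel \<pi> orb"
    and "B \<equiv> barker_kernel \<pi> orb"
  defines "GG \<equiv> fixed_set \<pi> G"
  shows "\<forall>P\<in>stat_set \<pi>.
     (\<forall>Q\<in>GG. KL \<pi> P Q = KL \<pi> P (mmul (mmul G P) G) + KL \<pi> (mmul (mmul G P) G) Q)
   \<and> mmul (mmul G P) G \<in> GG
   \<and> KL \<pi> P (mmul (mmul G P) G) = (INF Q\<in>GG. KL \<pi> P Q)
   \<and> (\<forall>Q\<in>GG. KL \<pi> P Q = KL \<pi> P (mmul (mmul G P) G) \<longrightarrow> Q = mmul (mmul G P) G)
   \<and> (\<forall>Q\<in>GG. KL \<pi> (mmul (mmul M P) M) Q
               = KL \<pi> (mmul (mmul M P) M) (mmul (mmul G P) G) + KL \<pi> (mmul (mmul G P) G) Q)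
   \<and> (\<forall>Q\<in>GG. KL \<pi> (mmul (mmul B P) B) Q
               = KL \<pi> (mmul (mmul B P) B) (mmul (mmul G P) G) + KL \<pi> (mmul (mmul G P) G) Q)
   \<and> KL \<pi> (mmul (mmul M P) M) (mmul (mmul G P) G) = (INF Q\<in>GG. KL \<pi> (mmul (mmul M P) M) Q)
   \<and> (\<forall>Q\<in>GG. KL \<pi> (mmul (mmul M P) M) Q = KL \<pi> (mmul (mmul M P) M) (mmul (mmul G P) G)
               \<longrightarrow> Q = mmul (mmul G P) G)
   \<and> KL \<pi> (mmul (mmul B P) B) (mmul (mmul G P) G) = (INF Q\<in>GG. KL \<pi> (mmul (mmul B P) B) Q)
   \<and> (\<forall>Q\<in>GG. KL \<pi> (mmul (mmul B P) B) Q = KL \<pi> (mmul (mmul B P) B) (mmul (mmul G P) G)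
               \<longrightarrow> Q = mmul (mmul G P) G)
   \<and> KL \<pi> P (Pi_mat \<pi>) \<ge> KL \<pi> (mmul (mmul G P) G) (Pi_mat \<pi>)
   \<and> KL \<pi> (mmul (mmul M P) M) (Pi_mat \<pi>) \<ge> KL \<pi> (mmul (mmul G P) G) (Pi_mat \<pi>)
   \<and> KL \<pi> (mmul (mmul B P) B) (Pi_mat \<pi>) \<ge> KL \<pi> (mmul (mmul G P) G) (Pi_mat \<pi>)"
proof -
  interpret weighted_partition \<pi> orb
    using pos group_action.orbit_refl[OF act] group_action.mem_orbit_iff_orbit_eq[OF act]
    by unfold_locales (simp_all add: orb_def)
  have sandwich_in_stat_set: "mmul (mmul K P) K \<in> stat_set \<pi>"
    if "orbit_kernel K" "P \<in> stat_set \<pi>" for K P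
    using that orbit_kernel_stat_set by (blast intro: stat_set_mmul)
  note projection = KL_projection_onto_fixed_set[OF pmf]
  show ?thesis
    unfolding GG_def G_def M_def B_def
    using projection[OF _ refl] projection[OF sandwich_in_stat_set gibbs_sandwich_orbit_kernel]
      gibbs_sandwich_in_fixed_set mh_kernel_orbit_kernel barker_kernel_orbit_kernel
    by blast
qed

end
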